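(* For every $n\ge 1$, $2w_n\in C(2q_n)$ and $2r_n\in C(2q_n)$, where $w_n=x_1\cdots x_n(x_1^2+1)$, $q_n=x_1^3x_2\cdots x_n$ and $r_n=x_1\cdots x_n$.
   Context: All operations are on $\mathbb{Z}_8$. For an operation $f$, $C(f)$ denotes the clone generated by $f$ together with binary addition and all unary constant operations. *)

theory Defs
  imports Main "HOL-Library.Numeral_Type"
begin

text \<open>Elements of Z_8 are the type 8 (ring of integers modulo 8).
  A finitary operation is a pair (k, F) with arity k and
  F :: (nat => 8) => 8 reading only the arguments x 0, ..., x (k-1).\<close>

type_synonym op8 = "nat \<times> ((nat \<Rightarrow> 8) \<Rightarrow> 8)"

inductive_set clone_gen :: "op8 set \<Rightarrow> op8 set" for G :: "op8 set" where
  proj: "i < k \<Longrightarrow> (k, \<lambda>x. x i) \<in> clone_gen G"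
| gen: "p \<in> G \<Longrightarrow> p \<in> clone_gen G"
| comp: "(m, f) \<in> clone_gen G \<Longrightarrow> (\<forall>j<m. (k, g j) \<in> clone_gen G)
          \<Longrightarrow> (k, \<lambda>x. f (\<lambda>j. g j x)) \<in> clone_gen G"

definition C :: "op8 \<Rightarrow> op8 set" where
  "C f = clone_gen ({f, (2, \<lambda>x. x 0 + x 1)} \<union> {(1, \<lambda>x. c) | c. True})"

text \<open>Variables x_1,...,x_n are x 0,...,x (n-1).\<close>
definition r_op :: "nat \<Rightarrow> (nat \<Rightarrow> 8) \<Rightarrow> 8" where
  "r_op n x = (\<Prod>i<n. x i)"

definition q_op :: "nat \<Rightarrow> (nat \<Rightarrow> 8) \<Rightarrow> 8" where
  "q_op n x = x 0 ^ 3 * (\<Prod>i\<in>{1..<n}. x i)"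

definition w_op :: "nat \<Rightarrow> (nat \<Rightarrow> 8) \<Rightarrow> 8" where
  "w_op n x = (\<Prod>i<n. x i) * (x 0 ^ 2 + 1)"

end

theory Submission
  imports Defs
begin

text \<open>In Z_8 one has 2xy = 2y^3(x + 1) + 2x^3(x + y + 1) + 3 * 2(x + y)^3(x + 1).
  Multiplied by x_3...x_n, each summand is 2q_n evaluated at (a, b, x_3, ..., x_n), where a and b
  are built from x_1, x_2 by additions and constants; hence 2r_n = 2x_1x_2 x_3...x_n lies in C(2q_n).
  Since w_n = q_n + r_n, so does 2w_n.\<close>

lemma C_proj: "i < k \<Longrightarrow> (k, \<lambda>x. x i) \<in> C f"
  unfolding C_def by (rule clone_gen.proj)

lemma C_gen: "(k, h) \<in> C (k, h)"
  unfolding C_def by (rule clone_gen.gen) simp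

lemma C_comp:
  "(m, h) \<in> C f \<Longrightarrow> (\<forall>j<m. (k, g j) \<in> C f) \<Longrightarrow> (k, \<lambda>x. h (\<lambda>j. g j x)) \<in> C f"
  unfolding C_def by (rule clone_gen.comp)

lemma C_add:
  assumes "(k, a) \<in> C f" and "(k, b) \<in> C f"
  shows "(k, \<lambda>x. a x + b x) \<in> C f"
proof -
  have plus: "(2, \<lambda>y. y 0 + y 1) \<in> C f"
    unfolding C_def by (rule clone_gen.gen) simp
  have "\<forall>j<2. (k, if j = 0 then a else b) \<in> C f"
    using assms by (auto simp: less_2_cases_iff)
  from C_comp[OF plus this] show ?thesis by simp
qed

lemma C_const:
  assumes "1 \<le> k"
  shows "(k, \<lambda>x. c) \<in> C f"
proof -
  have const: "(1, \<lambda>y. c) \<in> C f"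
    unfolding C_def by (rule clone_gen.gen) auto
  have "(k, \<lambda>x. (\<lambda>y. c) (\<lambda>j. x 0)) \<in> C f"
    by (rule C_comp[OF const, where g = "\<lambda>j x. x 0"]) (use assms in \<open>auto intro: C_proj\<close>)
  then show ?thesis by simp
qed

lemma C_of_nat_mult:
  assumes "(k, a) \<in> C f" and "1 \<le> k"
  shows "(k, \<lambda>x. of_nat m * a x) \<in> C f"
proof (induction m)
  case 0
  show ?case using C_const[OF assms(2)] by simp
next
  case (Suc m)
  from C_add[OF this assms(1)] show ?case by (simp add: algebra_simps)
qed

lemma Z8_cases: "(x::8) = 0 \<or> x = 1 \<or> x = 2 \<or> x = 3 \<or> x = 4 \<or> x = 5 \<or> x = 6 \<or> x = 7"
proof (cases x)
  case (of_int z)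
  then have "z = 0 \<or> z = 1 \<or> z = 2 \<or> z = 3 \<or> z = 4 \<or> z = 5 \<or> z = 6 \<or> z = 7" by auto
  then show ?thesis using of_int by auto
qed

lemma double_product_Z8:
  fixes x y :: 8
  shows "2 * x * y = 2 * y^3 * (x + 1) + 2 * x^3 * (x + y + 1) + 3 * (2 * (x + y)^3 * (x + 1))"
  using Z8_cases[of x] Z8_cases[of y] by (elim disjE) simp_all

definition tail_prod :: "nat \<Rightarrow> (nat \<Rightarrow> 8) \<Rightarrow> 8" where
  "tail_prod n x = (\<Prod>i\<in>{2..<n}. x i)"

lemma prod_from_1_eq_tail_prod:
  "2 \<le> n \<Longrightarrow> (\<Prod>i\<in>{1..<n}. x i) = x 1 * tail_prod n x"
  unfolding tail_prod_def by (simp add: prod.atLeast_Suc_lessThan numeral_2_eq_2)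

lemma r_op_eq_prod_from_1: "1 \<le> n \<Longrightarrow> r_op n x = x 0 * (\<Prod>i\<in>{1..<n}. x i)"
  unfolding r_op_def by (simp add: lessThan_atLeast0 prod.atLeast_Suc_lessThan)

lemma r_op_eq_tail_prod:
  assumes "2 \<le> n"
  shows "r_op n x = x 0 * x 1 * tail_prod n x"
  using assms r_op_eq_prod_from_1[of n x] prod_from_1_eq_tail_prod[OF assms, of x]
  by (simp add: mult.assoc)

lemma q_op_fun_upd:
  assumes "2 \<le> n"
  shows "q_op n (x(0 := a, 1 := b)) = a^3 * b * tail_prod n x"
proof -
  have "tail_prod n (x(0 := a, 1 := b)) = tail_prod n x"
    unfolding tail_prod_def by (intro prod.cong) auto
  then show ?thesis
    unfolding q_op_def prod_from_1_eq_tail_prod[OF assms] by (simp add: mult.assoc)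
qed

lemma w_op_eq_q_op_plus_r_op: "1 \<le> n \<Longrightarrow> w_op n x = q_op n x + r_op n x"
  by (simp add: w_op_def q_op_def r_op_def[symmetric] r_op_eq_prod_from_1 algebra_simps
      power2_eq_square power3_eq_cube)

lemma double_q_op_subst_in_C:
  assumes "2 \<le> n" and "(n, a) \<in> C (n, \<lambda>x. 2 * q_op n x)" and "(n, b) \<in> C (n, \<lambda>x. 2 * q_op n x)"
  shows "(n, \<lambda>x. 2 * a x ^ 3 * b x * tail_prod n x) \<in> C (n, \<lambda>x. 2 * q_op n x)"
proof -
  have "\<forall>j<n. (n, \<lambda>x. (x(0 := a x, 1 := b x)) j) \<in> C (n, \<lambda>x. 2 * q_op n x)"
  proof (intro allI impI)
    fix j assume "j < n"
    have "(\<lambda>x. (x(0 := a x, 1 := b x)) j) = (if j = 0 then a else if j = 1 then b else (\<lambda>x. x j))"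
      by auto
    then show "(n, \<lambda>x. (x(0 := a x, 1 := b x)) j) \<in> C (n, \<lambda>x. 2 * q_op n x)"
      using assms \<open>j < n\<close> by (auto intro: C_proj)
  qed
  from C_comp[OF C_gen this]
  have "(n, \<lambda>x. 2 * q_op n (x(0 := a x, 1 := b x))) \<in> C (n, \<lambda>x. 2 * q_op n x)" .
  then show ?thesis
    unfolding q_op_fun_upd[OF assms(1)] by (simp add: mult.assoc)
qed

lemma double_r_op_in_C:
  assumes "1 \<le> n"
  shows "(n, \<lambda>x. 2 * r_op n x) \<in> C (n, \<lambda>x. 2 * q_op n x)"
proof (cases "n = 1")
  case True
  have r_op_1: "r_op n x = x 0" for x
    using True by (simp add: r_op_def)
  have "(n, \<lambda>x. x 0 + x 0) \<in> C (n, \<lambda>x. 2 * q_op n x)"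
    using assms by (intro C_add C_proj) auto
  then show ?thesis
    by (simp only: r_op_1 mult_2)
next
  case False
  with assms have n: "2 \<le> n" by simp
  let ?F = "C (n, \<lambda>x. 2 * q_op n x)"
  let ?t = "tail_prod n"
  let ?s = "\<lambda>x. 2 * x 1 ^ 3 * (x 0 + 1) * ?t x + 2 * x 0 ^ 3 * (x 0 + x 1 + 1) * ?t x
      + of_nat 3 * (2 * (x 0 + x 1) ^ 3 * (x 0 + 1) * ?t x)"
  have x0: "(n, \<lambda>x. x 0) \<in> ?F" and x1: "(n, \<lambda>x. x 1) \<in> ?F" and one: "(n, \<lambda>x. 1) \<in> ?F"
    using n by (auto intro: C_proj C_const)
  have x0_1: "(n, \<lambda>x. x 0 + 1) \<in> ?F"
    by (intro C_add x0 one)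
  have x0_x1: "(n, \<lambda>x. x 0 + x 1) \<in> ?F"
    by (intro C_add x0 x1)
  have x0_x1_1: "(n, \<lambda>x. x 0 + x 1 + 1) \<in> ?F"
    by (intro C_add x0_x1 one)
  have "(n, \<lambda>x. 2 * x 1 ^ 3 * (x 0 + 1) * ?t x) \<in> ?F"
    by (rule double_q_op_subst_in_C[OF n x1 x0_1])
  moreover have "(n, \<lambda>x. 2 * x 0 ^ 3 * (x 0 + x 1 + 1) * ?t x) \<in> ?F"
    by (rule double_q_op_subst_in_C[OF n x0 x0_x1_1])
  moreover have "(n, \<lambda>x. of_nat 3 * (2 * (x 0 + x 1) ^ 3 * (x 0 + 1) * ?t x)) \<in> ?F"
    using n by (intro C_of_nat_mult double_q_op_subst_in_C x0_x1 x0_1) simp_all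
  ultimately have "(n, ?s) \<in> ?F"
    by (intro C_add)
  moreover have "(\<lambda>x. 2 * r_op n x) = ?s"
  proof
    fix x
    have "2 * r_op n x = 2 * x 0 * x 1 * ?t x"
      using r_op_eq_tail_prod[OF n] by (simp add: mult.assoc)
    also have "\<dots> = (2 * x 1 ^ 3 * (x 0 + 1) + 2 * x 0 ^ 3 * (x 0 + x 1 + 1)
        + 3 * (2 * (x 0 + x 1) ^ 3 * (x 0 + 1))) * ?t x"
      by (subst double_product_Z8) (rule refl)
    finally show "2 * r_op n x = ?s x" by (simp add: algebra_simps)
  qed
  ultimately show ?thesis by (simp only:)
qed

theorem lemma4p6:
  fixes n :: nat
  assumes "n \<ge> 1"
  shows "(n, \<lambda>x. 2 * w_op n x) \<in> C (n, \<lambda>x. 2 * q_op n x)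
       \<and> (n, \<lambda>x. 2 * r_op n x) \<in> C (n, \<lambda>x. 2 * q_op n x)"
proof
  have r: "(n, \<lambda>x. 2 * r_op n x) \<in> C (n, \<lambda>x. 2 * q_op n x)"
    using assms by (rule double_r_op_in_C)
  have "(n, \<lambda>x. 2 * q_op n x + 2 * r_op n x) \<in> C (n, \<lambda>x. 2 * q_op n x)"
    using C_gen r by (rule C_add)
  then show "(n, \<lambda>x. 2 * w_op n x) \<in> C (n, \<lambda>x. 2 * q_op n x)"
    using assms by (simp add: w_op_eq_q_op_plus_r_op distrib_left)
  show "(n, \<lambda>x. 2 * r_op n x) \<in> C (n, \<lambda>x. 2 * q_op n x)"
    by (fact r)
qed

end
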